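(* Let $I$ be an instance of the multicommodity flow feasibility problem: a directed graph $D=(V,A)$, capacities $u\in\mathbb{R}_+^A$, and commodities $K=\{1,\dots,k\}$, commodity $i$ having source $s_i\in V$, sink $t_i\in V$ and demand $d_i\ge0$. Construct the instance $I'$ of the robust path flow problem as follows: add a super source $s$ and super sink $t$; for each $i\in K$ add arcs $a_i=(s,s_i)$ and $z_i=(t_i,t)$ with $u_{a_i}=u_{z_i}=d_i$ and $c_{a_i}=c_{z_i}=i$; add an arc $e^*=(s,t)$ with $u_{e^*}=1$ and $c_{e^*}=k+1$; set $c_e=\infty$ for all $e\in A$ (original arcs keep capacities $u_e$); and set $B_I=\sum_{i\in K}i\,d_i$. Then there is a multicommodity flow in $D$ respecting the capacities $u$ and routing $d_i$ units from $s_i$ to $t_i$ for every $i\in K$ if and only if in $I'$ there is a feasible path flow $x$ with $\min_{z\in\Omega}\mathrm{val}(x,z)=1$.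
   Context: Robust path flow problem on a directed (multi)graph $D'=(V',A')$ with source $s$, sink $t$, capacities $u$, interdiction costs $c_e\in\mathbb{R}_+\cup\{\infty\}$ and interdictor budget $B_I$: $\mathcal{P}$ is the set of $s$-$t$-paths, the flow player picks $x\in X=\{x\in\mathbb{R}_+^{\mathcal{P}}:\sum_{P\ni e}x_P\le u_e\ \forall e\in A'\}$, the interdictor then picks $z\in\Omega=\{z\in\mathbb{R}_+^{A'\times\mathcal{P}}:\sum_{e\in A'}c_e\sum_{P\ni e}z_{e,P}\le B_I\}$ (with cost $\infty$ meaning flow cannot be stolen at that arc, i.e. $z_{e,P}=0$ whenever $c_e=\infty$), and $\mathrm{val}(x,z)=\sum_{P\in\mathcal{P}}(x_P-\sum_{e\in P}z_{e,P})^+$. The flow player's profit from $x$ is $\min_{z\in\Omega}\mathrm{val}(x,z)$. *)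

theory Defs
  imports "HOL-Analysis.Analysis"
begin

definition st_paths :: "'e set \<Rightarrow> ('e \<Rightarrow> 'v) \<Rightarrow> ('e \<Rightarrow> 'v) \<Rightarrow> 'v \<Rightarrow> 'v \<Rightarrow> 'e list set" where
  "st_paths A tailf headf s t =
     {P. P \<noteq> [] \<and> set P \<subseteq> A \<and> tailf (hd P) = s \<and> headf (last P) = t \<and>
         (\<forall>j. Suc j < length P \<longrightarrow> headf (P ! j) = tailf (P ! Suc j)) \<and>
         distinct (tailf (hd P) # map headf P)}"

definition path_flows ::
  "'e set \<Rightarrow> ('e \<Rightarrow> 'v) \<Rightarrow> ('e \<Rightarrow> 'v) \<Rightarrow> 'v \<Rightarrow> 'v \<Rightarrow> ('e \<Rightarrow> real) \<Rightarrow> ('e list \<Rightarrow> real) set" where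
  "path_flows A tailf headf s t u =
     {x. (\<forall>P\<in>st_paths A tailf headf s t. 0 \<le> x P) \<and>
         (\<forall>e\<in>A. (\<Sum>P\<in>{P\<in>st_paths A tailf headf s t. e \<in> set P}. x P) \<le> u e)}"

definition interdictions ::
  "'e set \<Rightarrow> ('e \<Rightarrow> 'v) \<Rightarrow> ('e \<Rightarrow> 'v) \<Rightarrow> 'v \<Rightarrow> 'v \<Rightarrow> ('e \<Rightarrow> ereal) \<Rightarrow> real
     \<Rightarrow> ('e \<Rightarrow> 'e list \<Rightarrow> real) set" where
  "interdictions A tailf headf s t c B =
     {z. (\<forall>e P. 0 \<le> z e P) \<and> (\<forall>e P. c e = \<infinity> \<longrightarrow> z e P = 0) \<and>
         (\<Sum>e\<in>A. real_of_ereal (c e) *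
             (\<Sum>P\<in>{P\<in>st_paths A tailf headf s t. e \<in> set P}. z e P)) \<le> B}"

definition robust_val ::
  "'e set \<Rightarrow> ('e \<Rightarrow> 'v) \<Rightarrow> ('e \<Rightarrow> 'v) \<Rightarrow> 'v \<Rightarrow> 'v \<Rightarrow> ('e list \<Rightarrow> real)
     \<Rightarrow> ('e \<Rightarrow> 'e list \<Rightarrow> real) \<Rightarrow> real" where
  "robust_val A tailf headf s t x z =
     (\<Sum>P\<in>st_paths A tailf headf s t. max 0 (x P - (\<Sum>e\<in>set P. z e P)))"

definition robust_profit ::
  "'e set \<Rightarrow> ('e \<Rightarrow> 'v) \<Rightarrow> ('e \<Rightarrow> 'v) \<Rightarrow> 'v \<Rightarrow> 'v \<Rightarrow> ('e \<Rightarrow> ereal) \<Rightarrow> real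
     \<Rightarrow> ('e list \<Rightarrow> real) \<Rightarrow> real" where
  "robust_profit A tailf headf s t c B x =
     (INF z\<in>interdictions A tailf headf s t c B. robust_val A tailf headf s t x z)"

definition mc_flow_feasible ::
  "'v set \<Rightarrow> 'a set \<Rightarrow> ('a \<Rightarrow> 'v) \<Rightarrow> ('a \<Rightarrow> 'v) \<Rightarrow> ('a \<Rightarrow> real) \<Rightarrow> nat
     \<Rightarrow> (nat \<Rightarrow> 'v) \<Rightarrow> (nat \<Rightarrow> 'v) \<Rightarrow> (nat \<Rightarrow> real) \<Rightarrow> bool" where
  "mc_flow_feasible V A tailf headf u k src snk d \<longleftrightarrow>
     (\<exists>f :: nat \<Rightarrow> 'a \<Rightarrow> real.
        (\<forall>i\<in>{1..k}. \<forall>e\<in>A. 0 \<le> f i e) \<and>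
        (\<forall>e\<in>A. (\<Sum>i=1..k. f i e) \<le> u e) \<and>
        (\<forall>i\<in>{1..k}. \<forall>v\<in>V.
            (\<Sum>e\<in>{e\<in>A. tailf e = v}. f i e) - (\<Sum>e\<in>{e\<in>A. headf e = v}. f i e)
              = (if v = src i then d i else 0) - (if v = snk i then d i else 0)))"

datatype 'v rvert = VOld 'v | VSrc | VSnk
datatype 'a rarc = AOld 'a | AIn nat | AOut nat | AStar

definition red_arcs :: "'a set \<Rightarrow> nat \<Rightarrow> 'a rarc set" where
  "red_arcs A k = AOld ` A \<union> AIn ` {1..k} \<union> AOut ` {1..k} \<union> {AStar}"

fun red_tail :: "('a \<Rightarrow> 'v) \<Rightarrow> (nat \<Rightarrow> 'v) \<Rightarrow> (nat \<Rightarrow> 'v) \<Rightarrow> 'a rarc \<Rightarrow> 'v rvert" where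
  "red_tail tailf src snk (AOld e) = VOld (tailf e)"
| "red_tail tailf src snk (AIn i) = VSrc"
| "red_tail tailf src snk (AOut i) = VOld (snk i)"
| "red_tail tailf src snk AStar = VSrc"

fun red_head :: "('a \<Rightarrow> 'v) \<Rightarrow> (nat \<Rightarrow> 'v) \<Rightarrow> (nat \<Rightarrow> 'v) \<Rightarrow> 'a rarc \<Rightarrow> 'v rvert" where
  "red_head headf src snk (AOld e) = VOld (headf e)"
| "red_head headf src snk (AIn i) = VOld (src i)"
| "red_head headf src snk (AOut i) = VSnk"
| "red_head headf src snk AStar = VSnk"

fun red_cap :: "('a \<Rightarrow> real) \<Rightarrow> (nat \<Rightarrow> real) \<Rightarrow> 'a rarc \<Rightarrow> real" where
  "red_cap u d (AOld e) = u e"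
| "red_cap u d (AIn i) = d i"
| "red_cap u d (AOut i) = d i"
| "red_cap u d AStar = 1"

fun red_cost :: "nat \<Rightarrow> 'a rarc \<Rightarrow> ereal" where
  "red_cost k (AOld e) = \<infinity>"
| "red_cost k (AIn i) = ereal (real i)"
| "red_cost k (AOut i) = ereal (real i)"
| "red_cost k AStar = ereal (real k + 1)"

definition red_budget :: "nat \<Rightarrow> (nat \<Rightarrow> real) \<Rightarrow> real" where
  "red_budget k d = (\<Sum>i=1..k. real i * d i)"

end

theory Submission
  imports Defs
begin

(* Given a multicommodity flow, decompose commodity i into simple src i - snk i paths, send them
   through a_i = AIn i and z_i = AOut i, and put one unit on e* = AStar. Stealing a unit of flow
   costs at least min(i,j) on a path entering through a_i and leaving through z_j, and k+1 on e*;
   on paths with i = j this cheapest price totals exactly B_I = \<Sum> i d_i. So the interdictor can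
   steal all commodity flow, but budget moved to e* is withdrawn from commodity paths, where it
   steals at a price of at most k: every unit stolen from e* leaves at least (k+1)/k units of
   commodity flow untouched, and the profit is 1.

   Conversely, let the profit of x be 1 and let C be the cheapest price of all commodity flow. The
   interdictor may steal all of it and spend B_I - C on e*, which must then keep its unit: C \<ge> B_I.
   As C \<le> \<Sum>_P i_P x_P \<le> \<Sum> i d_i and likewise for exit indices, all these inequalities are tight,
   so x only uses paths from a_i to z_i with the same i and saturates every a_i. The inner parts of
   these paths form the multicommodity flow. *)

section \<open>Walks\<close>

fun walk :: "('e \<Rightarrow> 'v) \<Rightarrow> ('e \<Rightarrow> 'v) \<Rightarrow> 'e list \<Rightarrow> 'v \<Rightarrow> 'v \<Rightarrow> bool" where
  "walk T H [] s t \<longleftrightarrow> s = t"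
| "walk T H (e # p) s t \<longleftrightarrow> T e = s \<and> walk T H p (H e) t"

definition simple_walks :: "'e set \<Rightarrow> ('e \<Rightarrow> 'v) \<Rightarrow> ('e \<Rightarrow> 'v) \<Rightarrow> 'v \<Rightarrow> 'v \<Rightarrow> 'e list set" where
  "simple_walks A T H s t = {p. set p \<subseteq> A \<and> walk T H p s t \<and> distinct (s # map H p)}"

lemma walk_append: "walk T H (p @ q) s t \<longleftrightarrow> (\<exists>m. walk T H p s m \<and> walk T H q m t)"
  by (induction p arbitrary: s) auto

lemma walk_drop:
  "walk T H p s t \<Longrightarrow> j \<le> length p \<Longrightarrow> walk T H (drop j p) ((s # map H p) ! j) t"
  by (induction p arbitrary: s j) (auto simp: nth_Cons split: nat.split)

lemma walk_shortcut:
  assumes "walk T H p s t"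
  obtains q where "walk T H q s t" "set q \<subseteq> set p" "distinct (s # map H q)"
  using assms
proof (induction p arbitrary: s thesis)
  case Nil
  then show ?case by auto
next
  case (Cons e p)
  then obtain q where q: "walk T H q (H e) t" "set q \<subseteq> set p" "distinct (H e # map H q)"
    by auto
  show ?case
  proof (cases "s \<in> set (H e # map H q)")
    case False
    then show ?thesis using Cons.prems q by (intro Cons.prems(1)[of "e # q"]) auto
  next
    case True
    then obtain j where j: "j \<le> length q" "(H e # map H q) ! j = s"
      by (metis in_set_conv_nth length_Cons length_map less_Suc_eq_le)
    have "s # map H (drop j q) = drop j (H e # map H q)"
      using j Cons_nth_drop_Suc[of j "H e # map H q"] by (simp add: drop_map)
    then have "distinct (s # map H (drop j q))"
      using q(3) by (metis distinct_drop)
    moreover have "walk T H (drop j q) s t" using walk_drop[OF q(1) j(1)] j(2) by simp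
    moreover have "set (drop j q) \<subseteq> set (e # p)" using q(2) set_drop_subset by fastforce
    ultimately show ?thesis using Cons.prems(1) by blast
  qed
qed

lemma walk_iff_chain:
  "P \<noteq> [] \<Longrightarrow> walk T H P s t \<longleftrightarrow>
     T (hd P) = s \<and> H (last P) = t \<and> (\<forall>j. Suc j < length P \<longrightarrow> H (P ! j) = T (P ! Suc j))"
proof (induction P arbitrary: s)
  case (Cons e q)
  show ?case
  proof (cases "q = []")
    case False
    have "(\<forall>j. Suc j < length (e # q) \<longrightarrow> H ((e # q) ! j) = T ((e # q) ! Suc j)) \<longleftrightarrow>
          H e = T (hd q) \<and> (\<forall>j. Suc j < length q \<longrightarrow> H (q ! j) = T (q ! Suc j))"
      using False by (auto simp: hd_conv_nth nth_Cons split: nat.split)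
    then show ?thesis using Cons.IH[OF False] False by auto
  qed simp
qed simp

lemma st_paths_eq_simple_walks: "st_paths A T H s t = simple_walks A T H s t - {[]}"
  by (force simp: st_paths_def simple_walks_def walk_iff_chain)

lemma finite_simple_walks: "finite A \<Longrightarrow> finite (simple_walks A T H s t)"
  by (rule finite_subset[of _ "{p. set p \<subseteq> A \<and> distinct p}"])
     (auto simp: simple_walks_def distinct_map finite_subset_distinct)

lemma finite_st_paths: "finite A \<Longrightarrow> finite (st_paths A T H s t)"
  by (simp add: st_paths_eq_simple_walks finite_simple_walks)

section \<open>Decomposing an arc flow into simple walks\<close>

definition net_outflow :: "'e set \<Rightarrow> ('e \<Rightarrow> 'v) \<Rightarrow> ('e \<Rightarrow> 'v) \<Rightarrow> ('e \<Rightarrow> real) \<Rightarrow> 'v \<Rightarrow> real" where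
  "net_outflow A T H f v = (\<Sum>e\<in>{e\<in>A. T e = v}. f e) - (\<Sum>e\<in>{e\<in>A. H e = v}. f e)"

lemma net_outflow_simple_walk_indicator:
  assumes "finite A" and "p \<in> simple_walks A T H s t"
  shows "net_outflow A T H (\<lambda>e. if e \<in> set p then 1 else 0) v =
           (if v = s then 1 else 0) - (if v = t then 1 else 0)"
proof -
  have restrict: "(\<Sum>e\<in>{e\<in>A. P e}. if e \<in> set p then 1 else 0) =
      (\<Sum>e\<in>set p. if P e then 1 else 0 :: real)" for P
  proof -
    have "{e\<in>A. P e} \<inter> set p = {e\<in>set p. P e}" using assms(2) by (auto simp: simple_walks_def)
    then show ?thesis
      using sum.inter_restrict[of "{e\<in>A. P e}" "\<lambda>_. 1::real" "set p"] assms(1)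
        sum.inter_filter[of "set p" "\<lambda>_. 1::real" P]
      by simp
  qed
  have "(\<Sum>e\<in>set p. if T e = v then 1 else 0 :: real) - (\<Sum>e\<in>set p. if H e = v then 1 else 0) =
          (if v = s then 1 else 0) - (if v = t then 1 else 0)"
    if "walk T H p s t" "distinct (s # map H p)" for p s
    using that
  proof (induction p arbitrary: s)
    case (Cons e p)
    have "e \<notin> set p" using Cons.prems(2) by auto
    moreover have "(\<Sum>e\<in>set p. if T e = v then 1 else 0 :: real) - (\<Sum>e\<in>set p. if H e = v then 1 else 0) =
        (if v = H e then 1 else 0) - (if v = t then 1 else 0)"
      using Cons by auto
    ultimately show ?case using Cons.prems by auto
  qed simp
  then show ?thesis
    using assms(2) by (simp add: net_outflow_def restrict simple_walks_def)
qed

lemma net_outflow_path_flow: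
  assumes "finite A" and "finite S" and "S \<subseteq> simple_walks A T H s t"
  shows "net_outflow A T H (\<lambda>e. \<Sum>p\<in>S. if e \<in> set p then w p else 0) v =
           (\<Sum>p\<in>S. w p) * ((if v = s then 1 else 0) - (if v = t then 1 else 0))"
proof -
  have "net_outflow A T H (\<lambda>e. \<Sum>p\<in>S. if e \<in> set p then w p else 0) v =
          (\<Sum>p\<in>S. w p * net_outflow A T H (\<lambda>e. if e \<in> set p then 1 else 0) v)"
    unfolding net_outflow_def
    by (simp add: sum.swap[where A = S] sum_distrib_left right_diff_distrib sum_subtractf if_distrib
        cong: if_cong)
  also have "\<dots> = (\<Sum>p\<in>S. w p * ((if v = s then 1 else 0) - (if v = t then 1 else 0)))"
    using assms by (intro sum.cong) (auto simp: net_outflow_simple_walk_indicator)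
  also have "\<dots> = (\<Sum>p\<in>S. w p) * ((if v = s then 1 else 0) - (if v = t then 1 else 0))"
    by (simp add: sum_distrib_right)
  finally show ?thesis .
qed

lemma sum_net_outflow_closed_nonpos:
  assumes "finite A" and "finite S" and "\<forall>e\<in>A. 0 \<le> f e"
    and closed: "\<forall>e\<in>A. T e \<in> S \<and> 0 < f e \<longrightarrow> H e \<in> S"
  shows "(\<Sum>v\<in>S. net_outflow A T H f v) \<le> 0"
proof -
  have group: "(\<Sum>v\<in>S. \<Sum>e\<in>{e\<in>A. g e = v}. f e) = (\<Sum>e\<in>A. if g e \<in> S then f e else 0)" for g
  proof -
    have "(\<Sum>v\<in>S. \<Sum>e\<in>{e\<in>A. g e = v}. f e) = (\<Sum>v\<in>S. \<Sum>e\<in>{e\<in>{e\<in>A. g e \<in> S}. g e = v}. f e)"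
      by (intro sum.cong) auto
    also have "\<dots> = (\<Sum>e\<in>{e\<in>A. g e \<in> S}. f e)"
      using assms(1,2) by (intro sum.group) auto
    finally show ?thesis using assms(1) by (simp add: sum.inter_filter)
  qed
  have "(\<Sum>e\<in>A. if T e \<in> S then f e else 0) \<le> (\<Sum>e\<in>A. if H e \<in> S then f e else 0)"
    using assms(3) closed by (intro sum_mono) (smt (verit))
  then show ?thesis by (simp add: net_outflow_def sum_subtractf group)
qed

lemma exists_positive_simple_walk:
  fixes f :: "'e \<Rightarrow> real"
  assumes "finite A" and "finite V" and ends: "\<forall>e\<in>A. T e \<in> V \<and> H e \<in> V" and "s \<in> V"
    and nonneg: "\<forall>e\<in>A. 0 \<le> f e" and "0 < d"
    and conservation: "\<forall>v\<in>V. net_outflow A T H f v = (if v = s then d else 0) - (if v = t then d else 0)"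
  obtains p where "p \<in> simple_walks A T H s t" and "\<forall>e\<in>set p. 0 < f e"
proof -
  \<comment> \<open>Vertices reachable from s along arcs of positive flow form a set of nonpositive net
    outflow; if t were not among them, their net outflow would be d.\<close>
  define S where "S = {v\<in>V. \<exists>p. set p \<subseteq> A \<and> walk T H p s v \<and> (\<forall>e\<in>set p. 0 < f e)}"
  have "finite S" using \<open>finite V\<close> by (simp add: S_def)
  have "t \<in> S"
  proof (rule ccontr)
    assume "t \<notin> S"
    have "s \<in> S" using \<open>s \<in> V\<close> unfolding S_def by (auto intro: exI[of _ "[]"])
    have "(\<Sum>v\<in>S. net_outflow A T H f v) = (\<Sum>v\<in>S. (if v = s then d else 0) - (if v = t then d else 0))"
      using conservation by (intro sum.cong) (auto simp: S_def)
    also have "\<dots> = d"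
      using \<open>s \<in> S\<close> \<open>t \<notin> S\<close> \<open>finite S\<close> by (simp add: sum_subtractf)
    finally have "(\<Sum>v\<in>S. net_outflow A T H f v) = d" .
    moreover have "(\<Sum>v\<in>S. net_outflow A T H f v) \<le> 0"
    proof (rule sum_net_outflow_closed_nonpos[OF \<open>finite A\<close> \<open>finite S\<close> nonneg], intro ballI impI)
      fix e assume e: "e \<in> A" "T e \<in> S \<and> 0 < f e"
      then obtain p where "set p \<subseteq> A" "walk T H p s (T e)" "\<forall>e\<in>set p. 0 < f e"
        by (auto simp: S_def)
      then have "set (p @ [e]) \<subseteq> A \<and> walk T H (p @ [e]) s (H e) \<and> (\<forall>e'\<in>set (p @ [e]). 0 < f e')"
        using e by (auto simp: walk_append)
      then show "H e \<in> S" using ends e(1) unfolding S_def by blast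
    qed
    ultimately show False using \<open>0 < d\<close> by simp
  qed
  then obtain p where p: "set p \<subseteq> A" "walk T H p s t" "\<forall>e\<in>set p. 0 < f e"
    by (auto simp: S_def)
  obtain q where "walk T H q s t" "set q \<subseteq> set p" "distinct (s # map H q)"
    using walk_shortcut[OF p(2)] .
  then show ?thesis using p that unfolding simple_walks_def by blast
qed

lemma net_outflow_minus_simple_walk:
  assumes "finite A" and "p \<in> simple_walks A T H s t"
  shows "net_outflow A T H (\<lambda>e. f e - m * (if e \<in> set p then 1 else 0)) v =
           net_outflow A T H f v - m * ((if v = s then 1 else 0) - (if v = t then 1 else 0))"
proof -
  have "net_outflow A T H (\<lambda>e. f e - m * (if e \<in> set p then 1 else 0)) v =
      net_outflow A T H f v - m * net_outflow A T H (\<lambda>e. if e \<in> set p then 1 else 0) v"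
    by (simp add: net_outflow_def sum_subtractf sum_distrib_left right_diff_distrib)
  then show ?thesis by (simp add: net_outflow_simple_walk_indicator[OF assms])
qed

lemma subtract_bottleneck_walk:
  fixes f :: "'e \<Rightarrow> real"
  assumes "finite A" and "finite V" and "\<forall>e\<in>A. T e \<in> V \<and> H e \<in> V" and "s \<in> V"
    and nonneg: "\<forall>e\<in>A. 0 \<le> f e" and "0 < d"
    and conservation: "\<forall>v\<in>V. net_outflow A T H f v = (if v = s then d else 0) - (if v = t then d else 0)"
  obtains p m where "p \<in> simple_walks A T H s t" and "0 < m" and "m \<le> d"
    and "\<forall>e\<in>A. 0 \<le> f e - m * (if e \<in> set p then 1 else 0)"
    and "\<forall>v\<in>V. net_outflow A T H (\<lambda>e. f e - m * (if e \<in> set p then 1 else 0)) v =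
           (if v = s then d - m else 0) - (if v = t then d - m else 0)"
    and "card {e\<in>A. 0 < f e - m * (if e \<in> set p then 1 else 0)} + (if 0 < d - m then 1 else 0)
           < card {e\<in>A. 0 < f e} + 1"
proof -
  obtain p where p: "p \<in> simple_walks A T H s t" "\<forall>e\<in>set p. 0 < f e"
    using exists_positive_simple_walk[OF assms] .
  have "set p \<subseteq> A" using p(1) by (simp add: simple_walks_def)
  define m where "m = Min (insert d (f ` set p))"
  define f' where "f' e = f e - m * (if e \<in> set p then 1 else 0)" for e
  have m: "0 < m" "m \<le> d" "\<forall>e\<in>set p. m \<le> f e"
    using p(2) \<open>0 < d\<close> by (auto simp: m_def)
  have "m = d \<or> (\<exists>e\<in>set p. f e = m)"
    using Min_in[of "insert d (f ` set p)"] by (auto simp: m_def)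
  have support: "{e\<in>A. 0 < f' e} \<subseteq> {e\<in>A. 0 < f e}" using m(1) by (auto simp: f'_def)
  have "card {e\<in>A. 0 < f' e} < card {e\<in>A. 0 < f e}" if "m \<noteq> d"
  proof (rule psubset_card_mono)
    obtain e where "e \<in> set p" "f e = m" using \<open>m \<noteq> d\<close> \<open>m = d \<or> _\<close> by blast
    then have "e \<in> {e\<in>A. 0 < f e} - {e\<in>A. 0 < f' e}"
      using \<open>set p \<subseteq> A\<close> m(1) by (auto simp: f'_def)
    then show "{e\<in>A. 0 < f' e} \<subset> {e\<in>A. 0 < f e}" using support by blast
  qed (simp add: \<open>finite A\<close>)
  moreover have "card {e\<in>A. 0 < f' e} \<le> card {e\<in>A. 0 < f e}"
    using support \<open>finite A\<close> by (simp add: card_mono)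
  ultimately have "card {e\<in>A. 0 < f' e} + (if 0 < d - m then 1 else 0) < card {e\<in>A. 0 < f e} + 1"
    by (cases "m = d") auto
  moreover have "\<forall>e\<in>A. 0 \<le> f' e" using nonneg m(3) by (simp add: f'_def)
  moreover have "\<forall>v\<in>V. net_outflow A T H f' v = (if v = s then d - m else 0) - (if v = t then d - m else 0)"
    using conservation unfolding f'_def by (auto simp: net_outflow_minus_simple_walk[OF \<open>finite A\<close> p(1)])
  ultimately show ?thesis using that[OF p(1) m(1,2)] unfolding f'_def by blast
qed

lemma simple_walk_decomposition:
  fixes f :: "'e \<Rightarrow> real"
  assumes "finite A" and "finite V" and "\<forall>e\<in>A. T e \<in> V \<and> H e \<in> V" and "s \<in> V"
    and "\<forall>e\<in>A. 0 \<le> f e" and "0 \<le> d"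
    and "\<forall>v\<in>V. net_outflow A T H f v = (if v = s then d else 0) - (if v = t then d else 0)"
  obtains w where "\<forall>p. 0 \<le> w p" and "(\<Sum>p\<in>simple_walks A T H s t. w p) = d"
    and "\<forall>e\<in>A. (\<Sum>p\<in>{p\<in>simple_walks A T H s t. e \<in> set p}. w p) \<le> f e"
proof -
  let ?W = "simple_walks A T H s t"
  have "finite ?W" using \<open>finite A\<close> by (rule finite_simple_walks)
  have "\<exists>w. (\<forall>p. 0 \<le> w p) \<and> (\<Sum>p\<in>?W. w p) = d \<and> (\<forall>e\<in>A. (\<Sum>p\<in>{p\<in>?W. e \<in> set p}. w p) \<le> f e)"
    using assms(5-7)
  proof (induction "card {e\<in>A. 0 < f e} + (if 0 < d then 1 else 0)" arbitrary: f d rule: less_induct)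
    case less
    show ?case
    proof (cases "d = 0")
      case True
      then show ?thesis using less.prems(1) by (intro exI[of _ "\<lambda>_. 0"]) auto
    next
      case False
      then have "0 < d" using less.prems(2) by simp
      then obtain p m where p: "p \<in> ?W" and m: "0 < m" "m \<le> d"
        and reduced: "\<forall>e\<in>A. 0 \<le> f e - m * (if e \<in> set p then 1 else 0)"
          "\<forall>v\<in>V. net_outflow A T H (\<lambda>e. f e - m * (if e \<in> set p then 1 else 0)) v =
             (if v = s then d - m else 0) - (if v = t then d - m else 0)"
          "card {e\<in>A. 0 < f e - m * (if e \<in> set p then 1 else 0)} + (if 0 < d - m then 1 else 0)
             < card {e\<in>A. 0 < f e} + (if 0 < d then 1 else 0)"
        using subtract_bottleneck_walk[OF assms(1-4) less.prems(1) _ less.prems(3)] by auto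
      obtain w' where w': "\<forall>p. 0 \<le> w' p" "(\<Sum>p\<in>?W. w' p) = d - m"
          "\<forall>e\<in>A. (\<Sum>p\<in>{p\<in>?W. e \<in> set p}. w' p) \<le> f e - m * (if e \<in> set p then 1 else 0)"
        using less.hyps[OF reduced(3) reduced(1) _ reduced(2)] m(2) by auto
      define w where "w q = w' q + (if q = p then m else 0)" for q
      have "(\<Sum>q\<in>?W. w q) = d"
        using w'(2) p \<open>finite ?W\<close> by (simp add: w_def sum.distrib)
      moreover have "(\<Sum>q\<in>{q\<in>?W. e \<in> set q}. w q) \<le> f e" if "e \<in> A" for e
      proof -
        have "(\<Sum>q\<in>{q\<in>?W. e \<in> set q}. w q) =
            (\<Sum>q\<in>{q\<in>?W. e \<in> set q}. w' q) + (if e \<in> set p then m else 0)"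
          using p \<open>finite ?W\<close> by (simp add: w_def sum.distrib)
        then show ?thesis using w'(3) that by auto
      qed
      moreover have "\<forall>q. 0 \<le> w q" using w'(1) m(1) by (simp add: w_def)
      ultimately show ?thesis by blast
    qed
  qed
  then show ?thesis using that by blast
qed

lemma mc_flow_walk_decomposition:
  assumes "finite V" and "finite A" and ends: "\<forall>e\<in>A. tailf e \<in> V \<and> headf e \<in> V"
    and demands: "\<forall>i\<in>{1..k}. src i \<in> V \<and> 0 \<le> d i"
    and "mc_flow_feasible V A tailf headf u k src snk d"
  obtains W where "\<forall>i\<in>{1..k}. \<forall>p. 0 \<le> W i p"
    and "\<forall>i\<in>{1..k}. (\<Sum>p\<in>simple_walks A tailf headf (src i) (snk i). W i p) = d i"
    and "\<forall>e\<in>A. (\<Sum>i=1..k. \<Sum>p\<in>{p\<in>simple_walks A tailf headf (src i) (snk i). e \<in> set p}. W i p) \<le> u e"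
proof -
  let ?W = "\<lambda>i. simple_walks A tailf headf (src i) (snk i)"
  obtain f where f_nonneg: "\<forall>i\<in>{1..k}. \<forall>e\<in>A. 0 \<le> f i e"
    and f_cap: "\<forall>e\<in>A. (\<Sum>i=1..k. f i e) \<le> u e"
    and f_conservation: "\<forall>i\<in>{1..k}. \<forall>v\<in>V.
      net_outflow A tailf headf (f i) v = (if v = src i then d i else 0) - (if v = snk i then d i else 0)"
    using assms(5) unfolding mc_flow_feasible_def net_outflow_def by blast
  have "\<forall>i\<in>{1..k}. \<exists>w. (\<forall>p. 0 \<le> w p) \<and> (\<Sum>p\<in>?W i. w p) = d i \<and>
      (\<forall>e\<in>A. (\<Sum>p\<in>{p\<in>?W i. e \<in> set p}. w p) \<le> f i e)"
  proof
    fix i assume i: "i \<in> {1..k}"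
    have "src i \<in> V" "0 \<le> d i" "\<forall>e\<in>A. 0 \<le> f i e" using demands f_nonneg i by auto
    moreover have "\<forall>v\<in>V. net_outflow A tailf headf (f i) v =
        (if v = src i then d i else 0) - (if v = snk i then d i else 0)"
      using f_conservation i by blast
    ultimately obtain w where "\<forall>p. 0 \<le> w p" "(\<Sum>p\<in>?W i. w p) = d i"
      "\<forall>e\<in>A. (\<Sum>p\<in>{p\<in>?W i. e \<in> set p}. w p) \<le> f i e"
      using simple_walk_decomposition[OF assms(2,1) ends] by blast
    then show "\<exists>w. (\<forall>p. 0 \<le> w p) \<and> (\<Sum>p\<in>?W i. w p) = d i \<and>
        (\<forall>e\<in>A. (\<Sum>p\<in>{p\<in>?W i. e \<in> set p}. w p) \<le> f i e)"
      by blast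
  qed
  from bchoice[OF this] obtain W where W: "\<forall>i\<in>{1..k}. (\<forall>p. 0 \<le> W i p) \<and> (\<Sum>p\<in>?W i. W i p) = d i \<and>
      (\<forall>e\<in>A. (\<Sum>p\<in>{p\<in>?W i. e \<in> set p}. W i p) \<le> f i e)" ..
  have cap: "\<forall>e\<in>A. (\<Sum>i=1..k. \<Sum>p\<in>{p\<in>?W i. e \<in> set p}. W i p) \<le> u e"
  proof
    fix e assume "e \<in> A"
    then have "(\<Sum>i=1..k. \<Sum>p\<in>{p\<in>?W i. e \<in> set p}. W i p) \<le> (\<Sum>i=1..k. f i e)"
      using W by (intro sum_mono) blast
    also have "\<dots> \<le> u e" using f_cap \<open>e \<in> A\<close> by blast
    finally show "(\<Sum>i=1..k. \<Sum>p\<in>{p\<in>?W i. e \<in> set p}. W i p) \<le> u e" .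
  qed
  have "\<forall>i\<in>{1..k}. \<forall>p. 0 \<le> W i p" and "\<forall>i\<in>{1..k}. (\<Sum>p\<in>?W i. W i p) = d i"
    using W by blast+
  then show ?thesis using cap by (rule that)
qed

section \<open>Robust path flows\<close>

lemma robust_val_eq_sum_min:
  "robust_val A T H s t x z = (\<Sum>P\<in>st_paths A T H s t. x P - min (x P) (\<Sum>e\<in>set P. z e P))"
  unfolding robust_val_def by (intro sum.cong) auto

lemma interdiction_cost_eq_sum_paths:
  assumes "finite A"
  shows "(\<Sum>e\<in>A. real_of_ereal (c e) * (\<Sum>P\<in>{P\<in>st_paths A T H s t. e \<in> set P}. z e P)) =
           (\<Sum>P\<in>st_paths A T H s t. \<Sum>e\<in>set P. real_of_ereal (c e) * z e P)"
proof -
  let ?SP = "st_paths A T H s t"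
  have "finite ?SP" using assms by (rule finite_st_paths)
  have "(\<Sum>e\<in>A. real_of_ereal (c e) * (\<Sum>P\<in>{P\<in>?SP. e \<in> set P}. z e P)) =
          (\<Sum>e\<in>A. \<Sum>P\<in>?SP. if e \<in> set P then real_of_ereal (c e) * z e P else 0)"
    using \<open>finite ?SP\<close> by (simp add: sum_distrib_left sum.inter_filter if_distrib cong: if_cong)
  also have "\<dots> = (\<Sum>P\<in>?SP. \<Sum>e\<in>A. if e \<in> set P then real_of_ereal (c e) * z e P else 0)"
    by (rule sum.swap)
  also have "\<dots> = (\<Sum>P\<in>?SP. \<Sum>e\<in>set P. real_of_ereal (c e) * z e P)"
  proof (rule sum.cong)
    fix P assume "P \<in> ?SP"
    then have "A \<inter> set P = set P" by (auto simp: st_paths_def)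
    then show "(\<Sum>e\<in>A. if e \<in> set P then real_of_ereal (c e) * z e P else 0) =
        (\<Sum>e\<in>set P. real_of_ereal (c e) * z e P)"
      using sum.inter_restrict[OF assms, of "\<lambda>e. real_of_ereal (c e) * z e P" "set P"] by simp
  qed simp
  finally show ?thesis .
qed

lemma interdiction_budget_bound:
  assumes "finite A" and z: "z \<in> interdictions A T H s t c B"
    and w: "\<forall>P\<in>st_paths A T H s t. 0 \<le> w P \<and> (\<forall>e\<in>set P. c e \<noteq> \<infinity> \<longrightarrow> w P \<le> real_of_ereal (c e))"
  shows "(\<Sum>P\<in>st_paths A T H s t. w P * min (x P) (\<Sum>e\<in>set P. z e P)) \<le> B"
proof -
  have z_nonneg: "\<forall>e P. 0 \<le> z e P" and z_uncut: "\<forall>e P. c e = \<infinity> \<longrightarrow> z e P = 0"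
    using z by (auto simp: interdictions_def)
  have "(\<Sum>P\<in>st_paths A T H s t. w P * min (x P) (\<Sum>e\<in>set P. z e P)) \<le>
          (\<Sum>P\<in>st_paths A T H s t. \<Sum>e\<in>set P. real_of_ereal (c e) * z e P)"
  proof (rule sum_mono)
    fix P assume P: "P \<in> st_paths A T H s t"
    have "w P * min (x P) (\<Sum>e\<in>set P. z e P) \<le> w P * (\<Sum>e\<in>set P. z e P)"
      using w P by (intro mult_left_mono) auto
    also have "\<dots> = (\<Sum>e\<in>set P. w P * z e P)" by (simp add: sum_distrib_left)
    also have "\<dots> \<le> (\<Sum>e\<in>set P. real_of_ereal (c e) * z e P)"
      using w P z_nonneg z_uncut by (intro sum_mono) (metis mult_right_mono mult_zero_right order_refl)
    finally show "w P * min (x P) (\<Sum>e\<in>set P. z e P) \<le> (\<Sum>e\<in>set P. real_of_ereal (c e) * z e P)" .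
  qed
  also have "\<dots> \<le> B"
    using z by (simp add: interdictions_def interdiction_cost_eq_sum_paths[OF \<open>finite A\<close>])
  finally show ?thesis .
qed

lemma interdiction_on_chosen_arcs:
  assumes "finite A"
    and a: "\<forall>P\<in>st_paths A T H s t. a P \<in> set P \<and> c (a P) \<noteq> \<infinity> \<and> 0 \<le> m P"
    and cost: "(\<Sum>P\<in>st_paths A T H s t. real_of_ereal (c (a P)) * m P) \<le> B"
  defines "z \<equiv> \<lambda>e P. if P \<in> st_paths A T H s t \<and> e = a P then m P else 0"
  shows "z \<in> interdictions A T H s t c B"
    and "robust_val A T H s t x z = (\<Sum>P\<in>st_paths A T H s t. max 0 (x P - m P))"
proof -
  have stolen: "(\<Sum>e\<in>set P. g e * z e P) = g (a P) * m P" if "P \<in> st_paths A T H s t" for g P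
    using a that by (simp add: z_def if_distrib cong: if_cong)
  have "(\<Sum>e\<in>A. real_of_ereal (c e) * (\<Sum>P\<in>{P\<in>st_paths A T H s t. e \<in> set P}. z e P)) \<le> B"
    using cost by (simp add: interdiction_cost_eq_sum_paths[OF \<open>finite A\<close>] stolen)
  then show "z \<in> interdictions A T H s t c B"
    using a by (auto simp: interdictions_def z_def)
  show "robust_val A T H s t x z = (\<Sum>P\<in>st_paths A T H s t. max 0 (x P - m P))"
    unfolding robust_val_def using stolen[where g = "\<lambda>_. 1"] by simp
qed

lemma robust_profit_le_robust_val:
  "z \<in> interdictions A T H s t c B \<Longrightarrow> robust_profit A T H s t c B x \<le> robust_val A T H s t x z"
  unfolding robust_profit_def
  by (rule cINF_lower) (auto intro!: bdd_belowI[of _ 0] sum_nonneg simp: robust_val_def)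

lemma robust_profit_greatest:
  assumes "interdictions A T H s t c B \<noteq> {}"
    and "\<And>z. z \<in> interdictions A T H s t c B \<Longrightarrow> b \<le> robust_val A T H s t x z"
  shows "b \<le> robust_profit A T H s t c B x"
  unfolding robust_profit_def using assms by (rule cINF_greatest)

lemma sum_group_by_index:
  fixes idx :: "'b \<Rightarrow> nat" and x :: "'b \<Rightarrow> real"
  assumes "finite S" and "finite I" and "idx ` S \<subseteq> I"
  shows "(\<Sum>P\<in>S. real (idx P) * x P) = (\<Sum>i\<in>I. real i * (\<Sum>P\<in>{P\<in>S. idx P = i}. x P))"
proof -
  have "(\<Sum>i\<in>I. real i * (\<Sum>P\<in>{P\<in>S. idx P = i}. x P)) =
      (\<Sum>i\<in>I. \<Sum>P\<in>{P\<in>S. idx P = i}. real (idx P) * x P)"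
    by (simp add: sum_distrib_left)
  also have "\<dots> = (\<Sum>P\<in>S. real (idx P) * x P)"
    using assms by (rule sum.group)
  finally show ?thesis ..
qed

lemma eq_if_sum_le_sum:
  fixes f g :: "'b \<Rightarrow> 'c::ordered_cancel_comm_monoid_add"
  assumes "finite S" and "\<forall>i\<in>S. f i \<le> g i" and "sum g S \<le> sum f S" and "i \<in> S"
  shows "f i = g i"
proof (rule ccontr)
  assume "f i \<noteq> g i"
  then have "sum f S < sum g S"
    using assms by (intro sum_strict_mono_ex1) (auto simp: order.strict_iff_order)
  then show False using assms(3) by simp
qed

section \<open>Paths of the reduced instance\<close>

definition commodity_path :: "nat \<Rightarrow> nat \<Rightarrow> 'a list \<Rightarrow> 'a rarc list" where
  "commodity_path i j p = AIn i # map AOld p @ [AOut j]"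

definition entry_index :: "'a rarc list \<Rightarrow> nat" where
  "entry_index P = (case hd P of AIn i \<Rightarrow> i | _ \<Rightarrow> 0)"

definition exit_index :: "'a rarc list \<Rightarrow> nat" where
  "exit_index P = (case last P of AOut j \<Rightarrow> j | _ \<Rightarrow> 0)"

definition inner_path :: "'a rarc list \<Rightarrow> 'a list" where
  "inner_path P = [a. AOld a \<leftarrow> P]"

lemma commodity_path_components [simp]:
  "entry_index (commodity_path i j p) = i"
  "exit_index (commodity_path i j p) = j"
  "inner_path (commodity_path i j p) = p"
  by (simp_all add: commodity_path_def entry_index_def exit_index_def inner_path_def comp_def)

lemma commodity_path_neq_AStar [simp]: "commodity_path i j p \<noteq> [AStar]"
  by (simp add: commodity_path_def)

lemma set_commodity_path: "set (commodity_path i j p) = {AIn i, AOut j} \<union> AOld ` set p"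
  by (auto simp: commodity_path_def)

definition cheapest_arc :: "'a rarc list \<Rightarrow> 'a rarc" where
  "cheapest_arc P =
     (if P = [AStar] then AStar
      else if entry_index P \<le> exit_index P then AIn (entry_index P) else AOut (exit_index P))"

definition cut_cost :: "nat \<Rightarrow> 'a rarc list \<Rightarrow> real" where
  "cut_cost k P = real_of_ereal (red_cost k (cheapest_arc P))"

lemma cut_cost_AStar [simp]: "cut_cost k [AStar] = real k + 1"
  by (simp add: cut_cost_def cheapest_arc_def)

lemma cut_cost_commodity_path [simp]: "cut_cost k (commodity_path i j p) = real (min i j)"
  by (simp add: cut_cost_def cheapest_arc_def min_def)

lemma red_tail_neq_VSnk: "red_tail tailf src snk e \<noteq> VSnk"
  by (cases e) auto

lemma red_walk_from_VSnk: "walk (red_tail tailf src snk) (red_head headf src snk) q VSnk t \<Longrightarrow> q = []"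
  by (cases q) (auto simp: red_tail_neq_VSnk)

lemma red_walk_map_AOld:
  "walk tailf headf p v w \<Longrightarrow>
     walk (red_tail tailf src snk) (red_head headf src snk) (map AOld p) (VOld v) (VOld w)"
  by (induction p arbitrary: v) auto

context
  fixes A :: "'a set" and k :: nat and tailf headf :: "'a \<Rightarrow> 'v" and src snk :: "nat \<Rightarrow> 'v"
begin

abbreviation red_walk :: "'a rarc list \<Rightarrow> 'v rvert \<Rightarrow> 'v rvert \<Rightarrow> bool" where
  "red_walk \<equiv> walk (red_tail tailf src snk) (red_head headf src snk)"

abbreviation red_paths :: "'a rarc list set" where
  "red_paths \<equiv> st_paths (red_arcs A k) (red_tail tailf src snk) (red_head headf src snk) VSrc VSnk"

abbreviation commodity_paths :: "'a rarc list set" where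
  "commodity_paths \<equiv> red_paths - {[AStar]}"

abbreviation red_flows :: "('a \<Rightarrow> real) \<Rightarrow> (nat \<Rightarrow> real) \<Rightarrow> ('a rarc list \<Rightarrow> real) set" where
  "red_flows u d \<equiv> path_flows (red_arcs A k) (red_tail tailf src snk) (red_head headf src snk)
     VSrc VSnk (red_cap u d)"

abbreviation red_interdictions :: "(nat \<Rightarrow> real) \<Rightarrow> ('a rarc \<Rightarrow> 'a rarc list \<Rightarrow> real) set" where
  "red_interdictions d \<equiv> interdictions (red_arcs A k) (red_tail tailf src snk) (red_head headf src snk)
     VSrc VSnk (red_cost k) (red_budget k d)"

abbreviation red_val :: "('a rarc list \<Rightarrow> real) \<Rightarrow> ('a rarc \<Rightarrow> 'a rarc list \<Rightarrow> real) \<Rightarrow> real" where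
  "red_val \<equiv> robust_val (red_arcs A k) (red_tail tailf src snk) (red_head headf src snk) VSrc VSnk"

abbreviation red_profit :: "(nat \<Rightarrow> real) \<Rightarrow> ('a rarc list \<Rightarrow> real) \<Rightarrow> real" where
  "red_profit d \<equiv> robust_profit (red_arcs A k) (red_tail tailf src snk) (red_head headf src snk)
     VSrc VSnk (red_cost k) (red_budget k d)"

lemma red_walk_from_VOld:
  assumes "red_walk q (VOld v) VSnk" and "set q \<subseteq> red_arcs A k"
    and "distinct (VOld v # map (red_head headf src snk) q)"
  shows "\<exists>j\<in>{1..k}. \<exists>p\<in>simple_walks A tailf headf v (snk j). q = map AOld p @ [AOut j]"
  using assms
proof (induction q arbitrary: v)
  case (Cons e q)
  show ?case
  proof (cases e)
    case (AOld a)
    then have a: "a \<in> A" "tailf a = v" and "red_walk q (VOld (headf a)) VSnk"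
      and "distinct (VOld (headf a) # map (red_head headf src snk) q)"
      using Cons.prems by (auto simp: red_arcs_def)
    then obtain j p where j: "j \<in> {1..k}" and p: "p \<in> simple_walks A tailf headf (headf a) (snk j)"
      and q: "q = map AOld p @ [AOut j]"
      using Cons.IH Cons.prems(2) by (metis insert_subset list.simps(15))
    have "v \<notin> headf ` set (a # p)"
      using Cons.prems(3) AOld q by (auto simp: image_iff)
    then have "a # p \<in> simple_walks A tailf headf v (snk j)"
      using a p by (auto simp: simple_walks_def)
    then show ?thesis using j q AOld by force
  next
    case (AOut j)
    then have "j \<in> {1..k}" "v = snk j" and "red_walk q VSnk VSnk"
      using Cons.prems by (auto simp: red_arcs_def)
    then show ?thesis
      using AOut red_walk_from_VSnk by (force simp: simple_walks_def)
  qed (use Cons.prems in auto)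
qed simp

lemma red_paths_iff:
  "P \<in> red_paths \<longleftrightarrow> P = [AStar] \<or>
     (\<exists>i\<in>{1..k}. \<exists>j\<in>{1..k}. \<exists>p\<in>simple_walks A tailf headf (src i) (snk j). P = commodity_path i j p)"
proof
  assume "P \<in> red_paths"
  then have P: "P \<noteq> []" "set P \<subseteq> red_arcs A k" "red_walk P VSrc VSnk"
      "distinct (VSrc # map (red_head headf src snk) P)"
    by (auto simp: st_paths_eq_simple_walks simple_walks_def)
  then obtain e q where "P = e # q" by (cases P) auto
  show "P = [AStar] \<or>
     (\<exists>i\<in>{1..k}. \<exists>j\<in>{1..k}. \<exists>p\<in>simple_walks A tailf headf (src i) (snk j). P = commodity_path i j p)"
  proof (cases e)
    case AStar
    then show ?thesis using P \<open>P = e # q\<close> red_walk_from_VSnk by auto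
  next
    case (AIn i)
    then have "i \<in> {1..k}" "red_walk q (VOld (src i)) VSnk" "set q \<subseteq> red_arcs A k"
      "distinct (VOld (src i) # map (red_head headf src snk) q)"
      using P \<open>P = e # q\<close> by (auto simp: red_arcs_def)
    then show ?thesis
      using red_walk_from_VOld \<open>P = e # q\<close> AIn by (fastforce simp: commodity_path_def)
  qed (use P \<open>P = e # q\<close> in auto)
next
  assume "P = [AStar] \<or>
     (\<exists>i\<in>{1..k}. \<exists>j\<in>{1..k}. \<exists>p\<in>simple_walks A tailf headf (src i) (snk j). P = commodity_path i j p)"
  then show "P \<in> red_paths"
  proof
    assume "P = [AStar]"
    then show ?thesis by (simp add: st_paths_eq_simple_walks simple_walks_def red_arcs_def)
  next
    assume "\<exists>i\<in>{1..k}. \<exists>j\<in>{1..k}. \<exists>p\<in>simple_walks A tailf headf (src i) (snk j). P = commodity_path i j p"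
    then obtain i j p where ij: "i \<in> {1..k}" "j \<in> {1..k}" and P: "P = commodity_path i j p"
      and p: "set p \<subseteq> A" "walk tailf headf p (src i) (snk j)" "distinct (src i # map headf p)"
      by (auto simp: simple_walks_def)
    have "distinct (VOld (src i) # map (VOld \<circ> headf) p)"
      using p(3) by (simp add: distinct_map inj_on_def image_iff)
    then show ?thesis
      using ij P p red_walk_map_AOld[OF p(2)]
      by (auto simp: st_paths_eq_simple_walks simple_walks_def commodity_path_def red_arcs_def walk_append
          comp_def)
  qed
qed

lemma AStar_in_red_paths: "[AStar] \<in> red_paths"
  by (simp add: red_paths_iff)

lemma commodity_path_decompose:
  assumes "P \<in> commodity_paths"
  shows "entry_index P \<in> {1..k}" and "exit_index P \<in> {1..k}"
    and "inner_path P \<in> simple_walks A tailf headf (src (entry_index P)) (snk (exit_index P))"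
    and "P = commodity_path (entry_index P) (exit_index P) (inner_path P)"
  using assms by (auto simp: red_paths_iff)

lemma index_image_commodity_paths:
  "entry_index ` commodity_paths \<subseteq> {1..k}" "exit_index ` commodity_paths \<subseteq> {1..k}"
  using commodity_path_decompose(1,2) by blast+

lemma commodity_path_in_commodity_paths:
  "i \<in> {1..k} \<Longrightarrow> j \<in> {1..k} \<Longrightarrow> p \<in> simple_walks A tailf headf (src i) (snk j) \<Longrightarrow>
     commodity_path i j p \<in> commodity_paths"
  by (auto simp: red_paths_iff commodity_path_def)

lemma finite_red_arcs: "finite A \<Longrightarrow> finite (red_arcs A k)"
  by (simp add: red_arcs_def)

lemma finite_red_paths: "finite A \<Longrightarrow> finite red_paths"
  by (simp add: finite_st_paths finite_red_arcs)

lemma sum_red_paths: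
  "finite A \<Longrightarrow> (\<Sum>P\<in>red_paths. g P) = g [AStar] + (\<Sum>P\<in>commodity_paths. g P)"
  using AStar_in_red_paths finite_red_paths by (simp add: sum.remove)

lemma red_paths_through_arc:
  "{P\<in>red_paths. AStar \<in> set P} = {[AStar]}"
  "{P\<in>red_paths. AIn i \<in> set P} = {P\<in>commodity_paths. entry_index P = i}"
  "{P\<in>red_paths. AOut j \<in> set P} = {P\<in>commodity_paths. exit_index P = j}"
  "{P\<in>red_paths. AOld a \<in> set P} = {P\<in>commodity_paths. a \<in> set (inner_path P)}"
  by (auto simp: red_paths_iff set_commodity_path)

lemma red_flows_iff:
  "x \<in> red_flows u d \<longleftrightarrow> (\<forall>P\<in>red_paths. 0 \<le> x P) \<and> x [AStar] \<le> 1 \<and>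
     (\<forall>i\<in>{1..k}. (\<Sum>P\<in>{P\<in>commodity_paths. entry_index P = i}. x P) \<le> d i \<and>
                  (\<Sum>P\<in>{P\<in>commodity_paths. exit_index P = i}. x P) \<le> d i) \<and>
     (\<forall>a\<in>A. (\<Sum>P\<in>{P\<in>commodity_paths. a \<in> set (inner_path P)}. x P) \<le> u a)"
proof -
  have ball_red_arcs: "(\<forall>e\<in>red_arcs A k. \<phi> e) \<longleftrightarrow>
      (\<forall>a\<in>A. \<phi> (AOld a)) \<and> (\<forall>i\<in>{1..k}. \<phi> (AIn i) \<and> \<phi> (AOut i)) \<and> \<phi> AStar" for \<phi>
    by (auto simp: red_arcs_def)
  show ?thesis
    by (auto simp: path_flows_def ball_red_arcs red_paths_through_arc)
qed

lemma sum_diagonal_commodity_paths: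
  assumes "i \<in> {1..k}"
  shows "(\<Sum>P\<in>{P\<in>commodity_paths. entry_index P = i \<and> exit_index P = i}. g P) =
           (\<Sum>p\<in>simple_walks A tailf headf (src i) (snk i). g (commodity_path i i p))"
proof -
  have "bij_betw (commodity_path i i) (simple_walks A tailf headf (src i) (snk i))
      {P\<in>commodity_paths. entry_index P = i \<and> exit_index P = i}"
  proof (rule bij_betw_byWitness[where f' = inner_path])
    show "commodity_path i i ` simple_walks A tailf headf (src i) (snk i)
        \<subseteq> {P\<in>commodity_paths. entry_index P = i \<and> exit_index P = i}"
      using commodity_path_in_commodity_paths[OF assms assms] by auto
    show "inner_path ` {P\<in>commodity_paths. entry_index P = i \<and> exit_index P = i}
        \<subseteq> simple_walks A tailf headf (src i) (snk i)"
    proof (rule image_subsetI)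
      fix P assume "P \<in> {P\<in>commodity_paths. entry_index P = i \<and> exit_index P = i}"
      then show "inner_path P \<in> simple_walks A tailf headf (src i) (snk i)"
        using commodity_path_decompose(3)[of P] by simp
    qed
    show "\<forall>P\<in>{P\<in>commodity_paths. entry_index P = i \<and> exit_index P = i}.
        commodity_path i i (inner_path P) = P"
      by (metis (mono_tags, lifting) commodity_path_decompose(4) mem_Collect_eq)
  qed simp
  then show ?thesis by (rule sum.reindex_bij_betw[symmetric])
qed

lemma sum_commodity_paths_diagonal:
  assumes "finite A" and diagonal: "\<forall>P\<in>commodity_paths. g P \<noteq> 0 \<longrightarrow> entry_index P = exit_index P"
    and "i \<in> {1..k}"
  shows "(\<Sum>P\<in>{P\<in>commodity_paths. entry_index P = i}. g P) =
           (\<Sum>p\<in>simple_walks A tailf headf (src i) (snk i). g (commodity_path i i p))"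
    and "(\<Sum>P\<in>{P\<in>commodity_paths. exit_index P = i}. g P) =
           (\<Sum>p\<in>simple_walks A tailf headf (src i) (snk i). g (commodity_path i i p))"
proof -
  have "finite commodity_paths" using \<open>finite A\<close> finite_red_paths by blast
  have "(\<Sum>P\<in>{P\<in>commodity_paths. idx P = i}. g P) =
      (\<Sum>P\<in>{P\<in>commodity_paths. entry_index P = i \<and> exit_index P = i}. g P)"
    if "idx = entry_index \<or> idx = exit_index" for idx
    using \<open>finite commodity_paths\<close> diagonal that
    by (intro sum.mono_neutral_right) auto
  then show "(\<Sum>P\<in>{P\<in>commodity_paths. entry_index P = i}. g P) =
           (\<Sum>p\<in>simple_walks A tailf headf (src i) (snk i). g (commodity_path i i p))"
    and "(\<Sum>P\<in>{P\<in>commodity_paths. exit_index P = i}. g P) =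
           (\<Sum>p\<in>simple_walks A tailf headf (src i) (snk i). g (commodity_path i i p))"
    using sum_diagonal_commodity_paths[OF \<open>i \<in> {1..k}\<close>] by auto
qed

lemma sum_commodity_paths_by_entry:
  assumes "finite A"
  shows "(\<Sum>P\<in>commodity_paths. g P) = (\<Sum>i=1..k. \<Sum>P\<in>{P\<in>commodity_paths. entry_index P = i}. g P)"
  using assms finite_red_paths index_image_commodity_paths by (intro sum.group[symmetric]) auto

lemma cheapest_arc_red_paths:
  assumes "P \<in> red_paths"
  shows "cheapest_arc P \<in> set P" and "red_cost k (cheapest_arc P) \<noteq> \<infinity>" and "0 \<le> cut_cost k P"
    and "\<forall>e\<in>set P. red_cost k e \<noteq> \<infinity> \<longrightarrow> cut_cost k P \<le> real_of_ereal (red_cost k e)"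
proof -
  have shape: "P = [AStar] \<or> (\<exists>i j p. P = commodity_path i j p)"
    using assms commodity_path_decompose(4) by blast
  then show "cheapest_arc P \<in> set P" and "red_cost k (cheapest_arc P) \<noteq> \<infinity>" and "0 \<le> cut_cost k P"
    by (auto simp: cheapest_arc_def set_commodity_path)
  from shape show "\<forall>e\<in>set P. red_cost k e \<noteq> \<infinity> \<longrightarrow> cut_cost k P \<le> real_of_ereal (red_cost k e)"
    by (auto simp: set_commodity_path)
qed

lemma cut_cost_commodity_paths:
  "P \<in> commodity_paths \<Longrightarrow> cut_cost k P = real (min (entry_index P) (exit_index P))"
  using commodity_path_decompose(4) cut_cost_commodity_path by metis

lemma red_interdiction_on_cheapest_arcs:
  assumes "finite A" and "\<forall>P\<in>red_paths. 0 \<le> m P"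
    and "(\<Sum>P\<in>red_paths. cut_cost k P * m P) \<le> red_budget k d"
  obtains z where "z \<in> red_interdictions d" and "red_val x z = (\<Sum>P\<in>red_paths. max 0 (x P - m P))"
proof -
  have chosen: "\<forall>P\<in>red_paths. cheapest_arc P \<in> set P \<and> red_cost k (cheapest_arc P) \<noteq> \<infinity> \<and> 0 \<le> m P"
    using cheapest_arc_red_paths(1,2) assms(2) by blast
  have cost: "(\<Sum>P\<in>red_paths. real_of_ereal (red_cost k (cheapest_arc P)) * m P) \<le> red_budget k d"
    using assms(3) by (simp add: cut_cost_def)
  note z = interdiction_on_chosen_arcs[OF finite_red_arcs[OF \<open>finite A\<close>] chosen cost]
  show ?thesis by (rule that[OF z(1) z(2)])
qed

section \<open>Flows of profit one\<close>

definition routes_demands :: "(nat \<Rightarrow> real) \<Rightarrow> ('a rarc list \<Rightarrow> real) \<Rightarrow> bool" where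
  "routes_demands d x \<longleftrightarrow> x [AStar] = 1 \<and>
     (\<forall>P\<in>commodity_paths. x P \<noteq> 0 \<longrightarrow> entry_index P = exit_index P) \<and>
     (\<forall>i\<in>{1..k}. (\<Sum>P\<in>{P\<in>commodity_paths. entry_index P = i}. x P) = d i)"

lemma red_budget_eq_cut_cost_sum:
  assumes "finite A" and "routes_demands d x"
  shows "red_budget k d = (\<Sum>P\<in>commodity_paths. cut_cost k P * x P)"
proof -
  have "(\<Sum>P\<in>commodity_paths. cut_cost k P * x P) = (\<Sum>P\<in>commodity_paths. real (entry_index P) * x P)"
    using assms(2) by (intro sum.cong) (auto simp: routes_demands_def cut_cost_commodity_paths)
  also have "\<dots> = (\<Sum>i=1..k. real i * (\<Sum>P\<in>{P\<in>commodity_paths. entry_index P = i}. x P))"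
    using assms(1) finite_red_paths index_image_commodity_paths by (intro sum_group_by_index) auto
  also have "\<dots> = red_budget k d"
    using assms(2) by (simp add: routes_demands_def red_budget_def)
  finally show ?thesis ..
qed

lemma red_val_ge_one:
  assumes "finite A" and nonneg: "\<forall>P\<in>red_paths. 0 \<le> x P" and routes: "routes_demands d x"
    and z: "z \<in> red_interdictions d"
  shows "1 \<le> red_val x z"
proof -
  define m where "m P = min (x P) (\<Sum>e\<in>set P. z e P)" for P
  define D where "D = (\<Sum>P\<in>commodity_paths. x P - m P)"
  have "(\<Sum>P\<in>red_paths. cut_cost k P * m P) \<le> red_budget k d"
    unfolding m_def using finite_red_arcs[OF \<open>finite A\<close>] z cheapest_arc_red_paths(3,4)
    by (intro interdiction_budget_bound) auto
  then have "(real k + 1) * m [AStar] \<le> (\<Sum>P\<in>commodity_paths. cut_cost k P * (x P - m P))"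
    using red_budget_eq_cut_cost_sum[OF \<open>finite A\<close> routes]
    by (simp add: sum_red_paths[OF \<open>finite A\<close>] right_diff_distrib sum_subtractf)
  also have "\<dots> \<le> (\<Sum>P\<in>commodity_paths. real k * (x P - m P))"
  proof (rule sum_mono)
    fix P assume "P \<in> commodity_paths"
    then have "cut_cost k P \<le> real k"
      using cut_cost_commodity_paths commodity_path_decompose(1) by fastforce
    then show "cut_cost k P * (x P - m P) \<le> real k * (x P - m P)"
      by (intro mult_right_mono) (auto simp: m_def)
  qed
  also have "\<dots> \<le> (real k + 1) * D"
    unfolding D_def sum_distrib_left[symmetric] by (intro mult_right_mono sum_nonneg) (auto simp: m_def)
  finally have "m [AStar] \<le> D" by simp
  moreover have "red_val x z = (x [AStar] - m [AStar]) + D"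
    unfolding robust_val_eq_sum_min m_def D_def by (rule sum_red_paths[OF \<open>finite A\<close>])
  moreover have "x [AStar] = 1" using routes by (simp add: routes_demands_def)
  ultimately show ?thesis by linarith
qed

lemma red_profit_eq_one:
  assumes "finite A" and nonneg: "\<forall>P\<in>red_paths. 0 \<le> x P" and routes: "routes_demands d x"
  shows "red_profit d x = 1"
proof -
  define m where "m P = (if P = [AStar] then 0 else x P)" for P
  have "(\<Sum>P\<in>red_paths. cut_cost k P * m P) = red_budget k d"
    using red_budget_eq_cut_cost_sum[OF \<open>finite A\<close> routes] by (simp add: sum_red_paths[OF \<open>finite A\<close>] m_def)
  then obtain z where z: "z \<in> red_interdictions d" "red_val x z = (\<Sum>P\<in>red_paths. max 0 (x P - m P))"
    using red_interdiction_on_cheapest_arcs[OF \<open>finite A\<close>, of m d x] nonneg by (force simp: m_def)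
  have "red_profit d x \<le> red_val x z" using z(1) by (rule robust_profit_le_robust_val)
  also have "\<dots> = max 0 (x [AStar])" by (simp add: z(2) sum_red_paths[OF \<open>finite A\<close>] m_def)
  also have "\<dots> = 1" using routes by (simp add: routes_demands_def)
  finally have "red_profit d x \<le> 1" .
  moreover have "1 \<le> red_profit d x"
    using z(1) red_val_ge_one[OF \<open>finite A\<close> nonneg routes] by (intro robust_profit_greatest) auto
  ultimately show ?thesis by simp
qed

lemma index_weighted_load_le_budget:
  assumes "finite A" and "x \<in> red_flows u d"
  shows "(\<Sum>P\<in>commodity_paths. real (entry_index P) * x P) \<le> red_budget k d"
    and "(\<Sum>P\<in>commodity_paths. real (exit_index P) * x P) \<le> red_budget k d"
proof -
  have "(\<Sum>P\<in>commodity_paths. real (idx P) * x P) \<le> red_budget k d"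
    if "idx = entry_index \<or> idx = exit_index" for idx
  proof -
    have "(\<Sum>P\<in>commodity_paths. real (idx P) * x P) =
        (\<Sum>i=1..k. real i * (\<Sum>P\<in>{P\<in>commodity_paths. idx P = i}. x P))"
      using that finite_red_paths[OF \<open>finite A\<close>] index_image_commodity_paths
      by (intro sum_group_by_index) auto
    also have "\<dots> \<le> (\<Sum>i=1..k. real i * d i)"
      using assms(2) that by (intro sum_mono mult_left_mono) (auto simp: red_flows_iff)
    finally show ?thesis by (simp add: red_budget_def)
  qed
  then show "(\<Sum>P\<in>commodity_paths. real (entry_index P) * x P) \<le> red_budget k d"
    and "(\<Sum>P\<in>commodity_paths. real (exit_index P) * x P) \<le> red_budget k d"
    by blast+
qed

lemma profit_one_exhausts_budget:
  assumes "finite A" and flow: "x \<in> red_flows u d" and profit: "red_profit d x = 1"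
  shows "x [AStar] = 1" and "red_budget k d \<le> (\<Sum>P\<in>commodity_paths. cut_cost k P * x P)"
proof -
  let ?C = "\<Sum>P\<in>commodity_paths. cut_cost k P * x P"
  have nonneg: "\<forall>P\<in>red_paths. 0 \<le> x P" and "x [AStar] \<le> 1"
    using flow by (simp_all add: red_flows_iff)
  have "?C \<le> (\<Sum>P\<in>commodity_paths. real (entry_index P) * x P)"
    using nonneg by (intro sum_mono mult_right_mono) (auto simp: cut_cost_commodity_paths)
  also have "\<dots> \<le> red_budget k d" by (rule index_weighted_load_le_budget(1)[OF \<open>finite A\<close> flow])
  finally have "?C \<le> red_budget k d" .
  define t where "t = min (x [AStar]) ((red_budget k d - ?C) / (real k + 1))"
  have "0 \<le> t" using nonneg AStar_in_red_paths \<open>?C \<le> red_budget k d\<close> by (simp add: t_def)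
  have "t \<le> (red_budget k d - ?C) / (real k + 1)" unfolding t_def by (rule min.cobounded2)
  then have "(real k + 1) * t \<le> red_budget k d - ?C"
    by (simp add: pos_le_divide_eq mult.commute)
  define m where "m P = (if P = [AStar] then t else x P)" for P
  have "(\<Sum>P\<in>red_paths. cut_cost k P * m P) = (real k + 1) * t + ?C"
    by (simp add: sum_red_paths[OF \<open>finite A\<close>] m_def)
  then obtain z where z: "z \<in> red_interdictions d" "red_val x z = (\<Sum>P\<in>red_paths. max 0 (x P - m P))"
    using red_interdiction_on_cheapest_arcs[OF \<open>finite A\<close>, of m d x] nonneg \<open>0 \<le> t\<close>
      \<open>(real k + 1) * t \<le> red_budget k d - ?C\<close>
    by (force simp: m_def)
  have "1 \<le> red_val x z" using robust_profit_le_robust_val[OF z(1), of x] profit by simp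
  also have "red_val x z = max 0 (x [AStar] - t)" by (simp add: z(2) sum_red_paths[OF \<open>finite A\<close>] m_def)
  finally have "x [AStar] = 1" and "t = 0" using \<open>x [AStar] \<le> 1\<close> \<open>0 \<le> t\<close> by auto
  then show "x [AStar] = 1" and "red_budget k d \<le> ?C"
    by (auto simp: t_def min_def divide_le_0_iff split: if_splits)
qed

lemma routes_demands_if_profit_one:
  assumes "finite A" and flow: "x \<in> red_flows u d" and "red_profit d x = 1"
  shows "routes_demands d x"
proof -
  let ?C = "\<Sum>P\<in>commodity_paths. cut_cost k P * x P"
  let ?F = "\<lambda>i. \<Sum>P\<in>{P\<in>commodity_paths. entry_index P = i}. x P"
  have fin: "finite commodity_paths" using finite_red_paths[OF \<open>finite A\<close>] by blast
  have nonneg: "\<forall>P\<in>red_paths. 0 \<le> x P" using flow by (simp add: red_flows_iff)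
  note exhausted = profit_one_exhausts_budget[OF assms]
  have cut_cost_tight: "cut_cost k P * x P = real (idx P) * x P"
    if idx: "idx = entry_index \<or> idx = exit_index" and P: "P \<in> commodity_paths" for idx P
  proof (rule eq_if_sum_le_sum[OF fin _ _ P])
    show "\<forall>Q\<in>commodity_paths. cut_cost k Q * x Q \<le> real (idx Q) * x Q"
      using idx nonneg by (auto simp: cut_cost_commodity_paths intro: mult_right_mono)
    show "(\<Sum>Q\<in>commodity_paths. real (idx Q) * x Q) \<le> ?C"
      using idx index_weighted_load_le_budget[OF \<open>finite A\<close> flow] exhausted(2) by auto
  qed
  have diagonal: "\<forall>P\<in>commodity_paths. x P \<noteq> 0 \<longrightarrow> entry_index P = exit_index P"
  proof (intro ballI impI)
    fix P assume "P \<in> commodity_paths" and "x P \<noteq> 0"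
    then show "entry_index P = exit_index P"
      using cut_cost_tight[of entry_index P] cut_cost_tight[of exit_index P] by simp
  qed
  have "(\<Sum>i=1..k. real i * ?F i) = (\<Sum>P\<in>commodity_paths. real (entry_index P) * x P)"
    using fin index_image_commodity_paths by (intro sum_group_by_index[symmetric]) auto
  also have "\<dots> = ?C"
  proof (rule sum.cong)
    fix P assume "P \<in> commodity_paths"
    then show "real (entry_index P) * x P = cut_cost k P * x P"
      using cut_cost_tight[of entry_index P] by auto
  qed simp
  finally have "(\<Sum>i=1..k. real i * d i) \<le> (\<Sum>i=1..k. real i * ?F i)"
    using exhausted(2) by (simp add: red_budget_def)
  then have "real i * ?F i = real i * d i" if "i \<in> {1..k}" for i
    using flow that by (intro eq_if_sum_le_sum) (auto simp: red_flows_iff)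
  then have "\<forall>i\<in>{1..k}. ?F i = d i" by simp
  then show ?thesis using exhausted(1) diagonal by (simp add: routes_demands_def)
qed

lemma mc_flow_feasible_if_routes_demands:
  assumes "finite A" and flow: "x \<in> red_flows u d" and routes: "routes_demands d x"
  shows "mc_flow_feasible V A tailf headf u k src snk d"
proof -
  let ?W = "\<lambda>i. simple_walks A tailf headf (src i) (snk i)"
  define f where "f i a = (\<Sum>p\<in>?W i. if a \<in> set p then x (commodity_path i i p) else 0)" for i a
  have fin: "finite commodity_paths" using finite_red_paths[OF \<open>finite A\<close>] by blast
  have diagonal: "\<forall>P\<in>commodity_paths. x P \<noteq> 0 \<longrightarrow> entry_index P = exit_index P"
    and demand: "\<forall>i\<in>{1..k}. (\<Sum>P\<in>{P\<in>commodity_paths. entry_index P = i}. x P) = d i"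
    using routes by (simp_all add: routes_demands_def)
  have "0 \<le> x (commodity_path i i p)" if "i \<in> {1..k}" and "p \<in> ?W i" for i p
    using flow commodity_path_in_commodity_paths[OF that(1,1,2)] by (simp add: red_flows_iff)
  then have "\<forall>i\<in>{1..k}. \<forall>a\<in>A. 0 \<le> f i a" by (auto simp: f_def intro!: sum_nonneg)
  moreover have "(\<Sum>i=1..k. f i a) \<le> u a" if "a \<in> A" for a
  proof -
    let ?g = "\<lambda>P. if a \<in> set (inner_path P) then x P else 0"
    have g_diagonal: "\<forall>P\<in>commodity_paths. ?g P \<noteq> 0 \<longrightarrow> entry_index P = exit_index P"
      using diagonal by simp
    have "(\<Sum>i=1..k. f i a) = (\<Sum>i=1..k. \<Sum>P\<in>{P\<in>commodity_paths. entry_index P = i}. ?g P)"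
      using sum_commodity_paths_diagonal(1)[OF \<open>finite A\<close> g_diagonal]
      by (intro sum.cong) (simp_all add: f_def)
    also have "\<dots> = (\<Sum>P\<in>commodity_paths. ?g P)"
      by (rule sum_commodity_paths_by_entry[OF \<open>finite A\<close>, symmetric])
    also have "\<dots> = (\<Sum>P\<in>{P\<in>commodity_paths. a \<in> set (inner_path P)}. x P)"
      by (rule sum.inter_filter[OF fin, symmetric])
    also have "\<dots> \<le> u a" using flow that by (simp add: red_flows_iff)
    finally show ?thesis .
  qed
  moreover have "net_outflow A tailf headf (f i) v =
      (if v = src i then d i else 0) - (if v = snk i then d i else 0)" if "i \<in> {1..k}" for i v
  proof -
    have "net_outflow A tailf headf (f i) v =
        (\<Sum>p\<in>?W i. x (commodity_path i i p)) *
          ((if v = src i then 1 else 0) - (if v = snk i then 1 else 0))"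
      unfolding f_def
      by (rule net_outflow_path_flow[OF \<open>finite A\<close> finite_simple_walks[OF \<open>finite A\<close>] order_refl])
    moreover have "(\<Sum>p\<in>?W i. x (commodity_path i i p)) = d i"
      using sum_commodity_paths_diagonal(1)[OF \<open>finite A\<close> diagonal that] demand that by simp
    ultimately show ?thesis by simp
  qed
  ultimately show ?thesis unfolding mc_flow_feasible_def net_outflow_def by blast
qed

lemma routes_demands_if_mc_flow_feasible:
  assumes "finite V" and "finite A" and "\<forall>e\<in>A. tailf e \<in> V \<and> headf e \<in> V"
    and "\<forall>i\<in>{1..k}. src i \<in> V \<and> 0 \<le> d i"
    and "mc_flow_feasible V A tailf headf u k src snk d"
  obtains x where "x \<in> red_flows u d" and "routes_demands d x"
proof -
  let ?W = "\<lambda>i. simple_walks A tailf headf (src i) (snk i)"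
  obtain W where W_nonneg: "\<forall>i\<in>{1..k}. \<forall>p. 0 \<le> W i p"
    and W_value: "\<forall>i\<in>{1..k}. (\<Sum>p\<in>?W i. W i p) = d i"
    and W_cap: "\<forall>e\<in>A. (\<Sum>i=1..k. \<Sum>p\<in>{p\<in>?W i. e \<in> set p}. W i p) \<le> u e"
    using mc_flow_walk_decomposition[OF assms] .
  define x where "x P =
      (if P = [AStar] then 1
       else if entry_index P = exit_index P then W (entry_index P) (inner_path P) else 0)" for P
  have x_AStar: "x [AStar] = 1" and x_diagonal: "x (commodity_path i i p) = W i p" for i p
    by (simp_all add: x_def)
  have fin: "finite commodity_paths" using finite_red_paths[OF \<open>finite A\<close>] by blast
  have diagonal: "\<forall>P\<in>commodity_paths. x P \<noteq> 0 \<longrightarrow> entry_index P = exit_index P"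
    by (simp add: x_def)
  have load_by_index: "(\<Sum>P\<in>{P\<in>commodity_paths. idx P = i}. x P) = d i"
    if "idx = entry_index \<or> idx = exit_index" and i: "i \<in> {1..k}" for idx i
  proof -
    have "(\<Sum>P\<in>{P\<in>commodity_paths. idx P = i}. x P) = (\<Sum>p\<in>?W i. W i p)"
      using that sum_commodity_paths_diagonal[OF \<open>finite A\<close> diagonal i] by (auto simp: x_diagonal)
    then show ?thesis using W_value i by simp
  qed
  have "(\<Sum>P\<in>{P\<in>commodity_paths. a \<in> set (inner_path P)}. x P) \<le> u a" if "a \<in> A" for a
  proof -
    let ?g = "\<lambda>P. if a \<in> set (inner_path P) then x P else 0"
    have g_diagonal: "\<forall>P\<in>commodity_paths. ?g P \<noteq> 0 \<longrightarrow> entry_index P = exit_index P"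
      using diagonal by simp
    have "(\<Sum>P\<in>{P\<in>commodity_paths. a \<in> set (inner_path P)}. x P) = (\<Sum>P\<in>commodity_paths. ?g P)"
      by (rule sum.inter_filter[OF fin])
    also have "\<dots> = (\<Sum>i=1..k. \<Sum>P\<in>{P\<in>commodity_paths. entry_index P = i}. ?g P)"
      by (rule sum_commodity_paths_by_entry[OF \<open>finite A\<close>])
    also have "\<dots> = (\<Sum>i=1..k. \<Sum>p\<in>?W i. ?g (commodity_path i i p))"
      using sum_commodity_paths_diagonal(1)[OF \<open>finite A\<close> g_diagonal] by (intro sum.cong) simp_all
    also have "\<dots> = (\<Sum>i=1..k. \<Sum>p\<in>?W i. if a \<in> set p then W i p else 0)"
      by (simp only: x_diagonal commodity_path_components)
    also have "\<dots> = (\<Sum>i=1..k. \<Sum>p\<in>{p\<in>?W i. a \<in> set p}. W i p)"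
      by (simp add: sum.inter_filter[OF finite_simple_walks[OF \<open>finite A\<close>]])
    also have "\<dots> \<le> u a" using W_cap that by blast
    finally show ?thesis .
  qed
  moreover have "0 \<le> x P" if "P \<in> red_paths" for P
  proof (cases "P = [AStar]")
    case False
    then have "entry_index P \<in> {1..k}" using that commodity_path_decompose(1) by blast
    then show ?thesis using W_nonneg by (simp add: x_def)
  qed (simp add: x_AStar)
  ultimately have "x \<in> red_flows u d"
    using load_by_index by (simp add: red_flows_iff x_AStar)
  moreover have "routes_demands d x"
    using x_AStar diagonal load_by_index by (simp add: routes_demands_def)
  ultimately show ?thesis by (rule that)
qed

end

theorem lemma2:
  fixes V :: "'v set" and A :: "'a set" and tailf headf :: "'a \<Rightarrow> 'v"
    and u :: "'a \<Rightarrow> real" and k :: nat and src snk :: "nat \<Rightarrow> 'v" and d :: "nat \<Rightarrow> real"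
  assumes "finite V" and "finite A"
    and "\<forall>e\<in>A. tailf e \<in> V \<and> headf e \<in> V"
    and "\<forall>e\<in>A. 0 \<le> u e"
    and "\<forall>i\<in>{1..k}. src i \<in> V \<and> snk i \<in> V \<and> 0 \<le> d i"
  shows "mc_flow_feasible V A tailf headf u k src snk d \<longleftrightarrow>
    (\<exists>x\<in>path_flows (red_arcs A k) (red_tail tailf src snk) (red_head headf src snk)
                    VSrc VSnk (red_cap u d).
       robust_profit (red_arcs A k) (red_tail tailf src snk) (red_head headf src snk)
         VSrc VSnk (red_cost k) (red_budget k d) x = 1)"
proof
  assume "mc_flow_feasible V A tailf headf u k src snk d"
  moreover have "\<forall>i\<in>{1..k}. src i \<in> V \<and> 0 \<le> d i" using assms(5) by blast
  ultimately obtain x where flow: "x \<in> red_flows A k tailf headf src snk u d"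
    and routes: "routes_demands A k tailf headf src snk d x"
    using routes_demands_if_mc_flow_feasible[OF assms(1-3)] by blast
  moreover have "\<forall>P\<in>red_paths A k tailf headf src snk. 0 \<le> x P"
    using flow by (simp add: red_flows_iff)
  ultimately show "\<exists>x\<in>red_flows A k tailf headf src snk u d. red_profit A k tailf headf src snk d x = 1"
    using red_profit_eq_one[OF assms(2)] by blast
next
  assume "\<exists>x\<in>red_flows A k tailf headf src snk u d. red_profit A k tailf headf src snk d x = 1"
  then obtain x where flow: "x \<in> red_flows A k tailf headf src snk u d"
    and "red_profit A k tailf headf src snk d x = 1" by blast
  then have "routes_demands A k tailf headf src snk d x"
    by (rule routes_demands_if_profit_one[OF assms(2)])
  with flow show "mc_flow_feasible V A tailf headf u k src snk d"
    by (rule mc_flow_feasible_if_routes_demands[OF assms(2)])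
qed

end
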